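(* Let $\sigma$ be a signature and let $\mathcal K$ be a nonempty class of causal teams over $\sigma$ (respectively, a nonempty class of generalized causal teams over $\sigma$). Then there is a $\mathcal{CO}[\sigma]$-formula $\varphi$ with $\mathcal K=\{T \text{ over } \sigma : T\models\varphi\}$ (satisfaction $\models^c$, respectively $\models^g$) if and only if $\mathcal K$ is flat and closed under equivalence.
   Context: A signature $\sigma=(\mathrm{Dom},\mathrm{Ran})$: $\mathrm{Dom}$ is a nonempty finite set of variables and each $X\in\mathrm{Dom}$ has a nonempty finite range $\mathrm{Ran}(X)$. For a sequence $\mathbf X=\langle X_1,\dots,X_n\rangle$, $\mathrm{Ran}(\mathbf X)=\mathrm{Ran}(X_1)\times\dots\times\mathrm{Ran}(X_n)$; for $\mathbf x\in\mathrm{Ran}(\mathbf X)$, $\mathbf X=\mathbf x$ abbreviates $X_1=x_1\wedge\dots\wedge X_n=x_n$; it is inconsistent if it contains conjuncts $X=x$, $X=x'$ with $x\neq x'$, consistent otherwise. $\mathcal{CO}[\sigma]$-formulas: $\alpha::=X=x\mid\neg\alpha\mid\alpha\wedge\alpha\mid\alpha\vee\alpha\mid\mathbf X=\mathbf x\;\Box\!\!\rightarrow\alpha$ (with $x\in\mathrm{Ran}(X)$, $\mathbf x\in\mathrm{Ran}(\mathbf X)$). An assignment is a map $s$ on $\mathrm{Dom}$ with $s(X)\in\mathrm{Ran}(X)$; $\mathbb A_\sigma$ is the set of assignments. A system of functions $\mathcal F$ assigns to each $V$ in a set $\mathrm{En}(\mathcal F)\subseteq\mathrm{Dom}$ a set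 $PA^{\mathcal F}_V\subseteq\mathrm{Dom}\setminus\{V\}$ and a function $\mathcal F_V:\mathrm{Ran}(PA^{\mathcal F}_V)\to\mathrm{Ran}(V)$; $\mathrm{Ex}(\mathcal F)=\mathrm{Dom}\setminus\mathrm{En}(\mathcal F)$. Only recursive systems (the graph with edges $X\to Y$ iff $X\in PA^{\mathcal F}_Y$ is acyclic) are considered; $\mathbb F_\sigma$ is the finite set of them. $s$ is compatible with $\mathcal F$ if $s(V)=\mathcal F_V(s(PA^{\mathcal F}_V))$ for all $V\in\mathrm{En}(\mathcal F)$; $\mathbb S_\sigma$ is the set of pairs $(s,\mathcal F)\in\mathbb A_\sigma\times\mathbb F_\sigma$ with $s$ compatible with $\mathcal F$. For consistent $\mathbf X=\mathbf x$: $\mathcal F_{\mathbf X=\mathbf x}$ is the restriction of $\mathcal F$ to $\mathrm{En}(\mathcal F)\setminus\mathbf X$, and $s^{\mathcal F}_{\mathbf X=\mathbf x}$ is defined recursively by $X_i\mapsto x_i$, $V\mapsto s(V)$ for $V\in\mathrm{Ex}(\mathcal F)\setminus\mathbf X$, $V\mapsto\mathcal F_V(s^{\mathcal F}_{\mathbf X=\mathbf x}(PA^{\mathcal F}_V))$ for $V\in\mathrm{En}(\mathcal F)\setminus\mathbf X$. A causal team is $T=(T^-,\mathcal F)$ with $\mathcal F\in\mathbb F_\sigma$ and $T^-\subseteq\mathbb A_\sigma$ consisting of assignments compatible with $\mathcal F$; all causal teams with empty team component are identified as the empty causal team $\emptyset$. $(S^-,\mathcal G)$ is a causal subteam of $(T^-,\mathcal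 F)$ if $S^-\subseteq T^-$ and $\mathcal G=\mathcal F$ ($\emptyset$ is a causal subteam of every causal team). $T_{\mathbf X=\mathbf x}=(\{s^{\mathcal F}_{\mathbf X=\mathbf x}:s\in T^-\},\mathcal F_{\mathbf X=\mathbf x})$. Satisfaction $\models^c$: $T\models X=x$ iff $s(X)=x$ for all $s\in T^-$; $T\models\neg\alpha$ iff $(\{s\},\mathcal F)\not\models\alpha$ for all $s\in T^-$; $\wedge$ as usual; $T\models\varphi\vee\psi$ iff there are causal subteams $T_1,T_2$ of $T$ with $T_1^-\cup T_2^-=T^-$, $T_1\models\varphi$, $T_2\models\psi$; $T\models\mathbf X=\mathbf x\;\Box\!\!\rightarrow\varphi$ iff $\mathbf X=\mathbf x$ is inconsistent or $T_{\mathbf X=\mathbf x}\models\varphi$. A generalized causal team is a set $T\subseteq\mathbb S_\sigma$; $T^-=\{s:(s,\mathcal F)\in T\text{ for some }\mathcal F\}$; causal subteams are subsets, unions are set unions; $T_{\mathbf X=\mathbf x}=\{(s^{\mathcal F}_{\mathbf X=\mathbf x},\mathcal F_{\mathbf X=\mathbf x}):(s,\mathcal F)\in T\}$. Satisfaction $\models^g$ has the same clauses except $T\models\neg\alpha$ iff $\{(s,\mathcal F)\}\not\models\alpha$ for all $(s,\mathcal F)\in T$, and $T\models\varphi\vee\psi$ iff $T=T_1\cup T_2$ with $T_1\models\varphi$, $T_2\models\psi$. Equivalence: $\mathrm{Cn}(\mathcal F)$ is the set of $V\in\mathrm{En}(\mathcal F)$ with $\mathcal F_V$ constant. $\mathcal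 F_V\sim\mathcal G_V$ means $\mathcal F_V(\mathbf x\mathbf y)=\mathcal G_V(\mathbf x\mathbf z)$ for all $\mathbf x\in\mathrm{Ran}(PA^{\mathcal F}_V\cap PA^{\mathcal G}_V)$, $\mathbf y\in\mathrm{Ran}(PA^{\mathcal F}_V\setminus PA^{\mathcal G}_V)$, $\mathbf z\in\mathrm{Ran}(PA^{\mathcal G}_V\setminus PA^{\mathcal F}_V)$. $\mathcal F\sim\mathcal G$ iff $\mathrm{En}(\mathcal F)\setminus\mathrm{Cn}(\mathcal F)=\mathrm{En}(\mathcal G)\setminus\mathrm{Cn}(\mathcal G)$ and $\mathcal F_V\sim\mathcal G_V$ for all $V$ in this set. Nonempty causal teams $(T^-,\mathcal F),(S^-,\mathcal G)$ are equivalent ($\approx$) iff $\mathcal F\sim\mathcal G$ and $T^-=S^-$. For a generalized causal team $T$, $T^{\mathcal F}=\{(s,\mathcal G)\in T:\mathcal G\sim\mathcal F\}$; generalized causal teams $S,T$ are equivalent iff $(S^{\mathcal F})^-=(T^{\mathcal F})^-$ for all $\mathcal F\in\mathbb F_\sigma$. A class $\mathcal K$ is closed under equivalence if $T\in\mathcal K$ and $T\approx S$ imply $S\in\mathcal K$. It is flat if: for causal teams, $(T^-,\mathcal F)\in\mathcal K$ iff $(\{s\},\mathcal F)\in\mathcal K$ for all $s\in T^-$; for generalized causal teams, $T\in\mathcal K$ iff $\{(s,\mathcal F)\}\in\mathcal K$ for all $(s,\mathcal F)\in T$. *)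

theory Defs
  imports Main "HOL-Library.FuncSet"
begin

record ('v, 'a) signature =
  Dom :: "'v set"
  Rng :: "'v \<Rightarrow> 'a set"

definition wf_sig :: "('v, 'a) signature \<Rightarrow> bool" where
  "wf_sig \<sigma> \<longleftrightarrow> finite (Dom \<sigma>) \<and> Dom \<sigma> \<noteq> {} \<and>
     (\<forall>X\<in>Dom \<sigma>. finite (Rng \<sigma> X) \<and> Rng \<sigma> X \<noteq> {})"

definition assignments :: "('v, 'a) signature \<Rightarrow> ('v \<Rightarrow> 'a) set" where
  "assignments \<sigma> = PiE (Dom \<sigma>) (Rng \<sigma>)"

text \<open>F_V : Ran(PA_V) \<rightarrow> Ran(V) is represented by a function on extensional
  functions with domain PA_V (canonically undefined outside Ran(PA_V)).
  Outside En the components are canonically empty/undefined.\<close>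
record ('v, 'a) sysf =
  En :: "'v set"
  PA :: "'v \<Rightarrow> 'v set"
  Fn :: "'v \<Rightarrow> ('v \<Rightarrow> 'a) \<Rightarrow> 'a"

definition graph_edges :: "('v, 'a) sysf \<Rightarrow> ('v \<times> 'v) set" where
  "graph_edges F = {(X, Y). Y \<in> En F \<and> X \<in> PA F Y}"

definition is_sys :: "('v, 'a) signature \<Rightarrow> ('v, 'a) sysf \<Rightarrow> bool" where
  "is_sys \<sigma> F \<longleftrightarrow>
     En F \<subseteq> Dom \<sigma> \<and>
     (\<forall>V\<in>En F. PA F V \<subseteq> Dom \<sigma> - {V} \<and>
        Fn F V \<in> PiE (PiE (PA F V) (Rng \<sigma>)) (\<lambda>_. Rng \<sigma> V)) \<and>
     (\<forall>V. V \<notin> En F \<longrightarrow> PA F V = {} \<and> Fn F V = (\<lambda>_. undefined)) \<and>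
     acyclic (graph_edges F)"

definition systems :: "('v, 'a) signature \<Rightarrow> ('v, 'a) sysf set" where
  "systems \<sigma> = {F. is_sys \<sigma> F}"

definition compatible :: "('v \<Rightarrow> 'a) \<Rightarrow> ('v, 'a) sysf \<Rightarrow> bool" where
  "compatible s F \<longleftrightarrow> (\<forall>V\<in>En F. s V = Fn F V (restrict s (PA F V)))"

definition empty_sys :: "('v, 'a) sysf" where
  "empty_sys = \<lparr>En = {}, PA = (\<lambda>_. {}), Fn = (\<lambda>_ _. undefined)\<rparr>"

text \<open>An intervention X = x is a list of (variable, value) pairs.\<close>
definition consistent :: "('v \<times> 'a) list \<Rightarrow> bool" where
  "consistent xs \<longleftrightarrow> (\<forall>(X, x)\<in>set xs. \<forall>(Y, y)\<in>set xs. X = Y \<longrightarrow> x = y)"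

definition ivars :: "('v \<times> 'a) list \<Rightarrow> 'v set" where
  "ivars xs = fst ` set xs"

definition restr_sys :: "('v, 'a) sysf \<Rightarrow> ('v \<times> 'a) list \<Rightarrow> ('v, 'a) sysf" where
  "restr_sys F xs =
     \<lparr>En = En F - ivars xs,
      PA = (\<lambda>V. if V \<in> En F - ivars xs then PA F V else {}),
      Fn = (\<lambda>V. if V \<in> En F - ivars xs then Fn F V else (\<lambda>_. undefined))\<rparr>"

text \<open>The intervened assignment s^F_{X=x}, defined as the unique assignment
  satisfying the recursive clauses (unique since F is recursive).\<close>
definition interv :: "('v, 'a) sysf \<Rightarrow> ('v \<times> 'a) list \<Rightarrow> ('v \<Rightarrow> 'a) \<Rightarrow> ('v \<Rightarrow> 'a)" where
  "interv F xs s = (THE t.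
      (\<forall>(X, x)\<in>set xs. t X = x) \<and>
      (\<forall>V. V \<notin> En F \<and> V \<notin> ivars xs \<longrightarrow> t V = s V) \<and>
      (\<forall>V\<in>En F. V \<notin> ivars xs \<longrightarrow> t V = Fn F V (restrict t (PA F V))))"

datatype ('v, 'a) CO =
    Eq 'v 'a
  | Neg "('v, 'a) CO"
  | Conj "('v, 'a) CO" "('v, 'a) CO"
  | Disj "('v, 'a) CO" "('v, 'a) CO"
  | Cf "('v \<times> 'a) list" "('v, 'a) CO"

fun wf_form :: "('v, 'a) signature \<Rightarrow> ('v, 'a) CO \<Rightarrow> bool" where
  "wf_form \<sigma> (Eq X x) \<longleftrightarrow> X \<in> Dom \<sigma> \<and> x \<in> Rng \<sigma> X"
| "wf_form \<sigma> (Neg a) \<longleftrightarrow> wf_form \<sigma> a"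
| "wf_form \<sigma> (Conj a b) \<longleftrightarrow> wf_form \<sigma> a \<and> wf_form \<sigma> b"
| "wf_form \<sigma> (Disj a b) \<longleftrightarrow> wf_form \<sigma> a \<and> wf_form \<sigma> b"
| "wf_form \<sigma> (Cf xs a) \<longleftrightarrow> xs \<noteq> [] \<and>
     (\<forall>(X, x)\<in>set xs. X \<in> Dom \<sigma> \<and> x \<in> Rng \<sigma> X) \<and> wf_form \<sigma> a"

type_synonym ('v, 'a) cteam = "('v \<Rightarrow> 'a) set \<times> ('v, 'a) sysf"

text \<open>All causal teams with empty team component are identified with the
  canonical empty causal team ({}, empty_sys).\<close>
definition cteams :: "('v, 'a) signature \<Rightarrow> ('v, 'a) cteam set" where
  "cteams \<sigma> = {(T, F). F \<in> systems \<sigma> \<and> T \<subseteq> assignments \<sigma> \<and>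
                 (\<forall>s\<in>T. compatible s F) \<and> (T = {} \<longrightarrow> F = empty_sys)}"

definition norm_ct :: "('v \<Rightarrow> 'a) set \<Rightarrow> ('v, 'a) sysf \<Rightarrow> ('v, 'a) cteam" where
  "norm_ct T F = (if T = {} then ({}, empty_sys) else (T, F))"

definition csubteam :: "('v, 'a) cteam \<Rightarrow> ('v, 'a) cteam \<Rightarrow> bool" where
  "csubteam S T \<longleftrightarrow> fst S \<subseteq> fst T \<and> (snd S = snd T \<or> fst S = {})"

definition cinterv :: "('v, 'a) cteam \<Rightarrow> ('v \<times> 'a) list \<Rightarrow> ('v, 'a) cteam" where
  "cinterv T xs = norm_ct (interv (snd T) xs ` fst T) (restr_sys (snd T) xs)"

fun sat_c :: "('v, 'a) cteam \<Rightarrow> ('v, 'a) CO \<Rightarrow> bool" where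
  "sat_c T (Eq X x) \<longleftrightarrow> (\<forall>s\<in>fst T. s X = x)"
| "sat_c T (Neg a) \<longleftrightarrow> (\<forall>s\<in>fst T. \<not> sat_c ({s}, snd T) a)"
| "sat_c T (Conj a b) \<longleftrightarrow> sat_c T a \<and> sat_c T b"
| "sat_c T (Disj a b) \<longleftrightarrow> (\<exists>T1 T2. csubteam T1 T \<and> csubteam T2 T \<and>
      fst T1 \<union> fst T2 = fst T \<and> sat_c T1 a \<and> sat_c T2 b)"
| "sat_c T (Cf xs a) \<longleftrightarrow> \<not> consistent xs \<or> sat_c (cinterv T xs) a"

type_synonym ('v, 'a) gteam = "(('v \<Rightarrow> 'a) \<times> ('v, 'a) sysf) set"

definition Sset :: "('v, 'a) signature \<Rightarrow> (('v \<Rightarrow> 'a) \<times> ('v, 'a) sysf) set" where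
  "Sset \<sigma> = {(s, F). s \<in> assignments \<sigma> \<and> F \<in> systems \<sigma> \<and> compatible s F}"

definition gteams :: "('v, 'a) signature \<Rightarrow> ('v, 'a) gteam set" where
  "gteams \<sigma> = Pow (Sset \<sigma>)"

definition ginterv :: "('v, 'a) gteam \<Rightarrow> ('v \<times> 'a) list \<Rightarrow> ('v, 'a) gteam" where
  "ginterv T xs = (\<lambda>(s, F). (interv F xs s, restr_sys F xs)) ` T"

fun sat_g :: "('v, 'a) gteam \<Rightarrow> ('v, 'a) CO \<Rightarrow> bool" where
  "sat_g T (Eq X x) \<longleftrightarrow> (\<forall>(s, F)\<in>T. s X = x)"
| "sat_g T (Neg a) \<longleftrightarrow> (\<forall>p\<in>T. \<not> sat_g {p} a)"
| "sat_g T (Conj a b) \<longleftrightarrow> sat_g T a \<and> sat_g T b"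
| "sat_g T (Disj a b) \<longleftrightarrow> (\<exists>T1 T2. T = T1 \<union> T2 \<and> sat_g T1 a \<and> sat_g T2 b)"
| "sat_g T (Cf xs a) \<longleftrightarrow> \<not> consistent xs \<or> sat_g (ginterv T xs) a"

definition Cn :: "('v, 'a) signature \<Rightarrow> ('v, 'a) sysf \<Rightarrow> 'v set" where
  "Cn \<sigma> F = {V\<in>En F. \<exists>c. \<forall>g\<in>PiE (PA F V) (Rng \<sigma>). Fn F V g = c}"

text \<open>F_V ~ G_V: a choice of x, y, z as in the paper is the same as a single
  assignment g to PA_F(V) \<union> PA_G(V).\<close>
definition fun_sim :: "('v, 'a) signature \<Rightarrow> ('v, 'a) sysf \<Rightarrow> ('v, 'a) sysf \<Rightarrow> 'v \<Rightarrow> bool" where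
  "fun_sim \<sigma> F G V \<longleftrightarrow>
     (\<forall>g\<in>PiE (PA F V \<union> PA G V) (Rng \<sigma>).
        Fn F V (restrict g (PA F V)) = Fn G V (restrict g (PA G V)))"

definition sys_sim :: "('v, 'a) signature \<Rightarrow> ('v, 'a) sysf \<Rightarrow> ('v, 'a) sysf \<Rightarrow> bool" where
  "sys_sim \<sigma> F G \<longleftrightarrow> En F - Cn \<sigma> F = En G - Cn \<sigma> G \<and>
     (\<forall>V\<in>En F - Cn \<sigma> F. fun_sim \<sigma> F G V)"

definition ct_equiv :: "('v, 'a) signature \<Rightarrow> ('v, 'a) cteam \<Rightarrow> ('v, 'a) cteam \<Rightarrow> bool" where
  "ct_equiv \<sigma> T S \<longleftrightarrow> fst T \<noteq> {} \<and> fst S \<noteq> {} \<and>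
     sys_sim \<sigma> (snd T) (snd S) \<and> fst T = fst S"

definition gt_restrict :: "('v, 'a) signature \<Rightarrow> ('v, 'a) gteam \<Rightarrow> ('v, 'a) sysf \<Rightarrow> ('v, 'a) gteam" where
  "gt_restrict \<sigma> T F = {(s, G)\<in>T. sys_sim \<sigma> G F}"

definition gt_equiv :: "('v, 'a) signature \<Rightarrow> ('v, 'a) gteam \<Rightarrow> ('v, 'a) gteam \<Rightarrow> bool" where
  "gt_equiv \<sigma> S T \<longleftrightarrow>
     (\<forall>F\<in>systems \<sigma>. fst ` gt_restrict \<sigma> S F = fst ` gt_restrict \<sigma> T F)"

definition closed_equiv_c :: "('v, 'a) signature \<Rightarrow> ('v, 'a) cteam set \<Rightarrow> bool" where
  "closed_equiv_c \<sigma> K \<longleftrightarrow>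
     (\<forall>T S. T \<in> K \<and> S \<in> cteams \<sigma> \<and> ct_equiv \<sigma> T S \<longrightarrow> S \<in> K)"

definition flat_c :: "('v, 'a) signature \<Rightarrow> ('v, 'a) cteam set \<Rightarrow> bool" where
  "flat_c \<sigma> K \<longleftrightarrow>
     (\<forall>T F. (T, F) \<in> cteams \<sigma> \<longrightarrow> ((T, F) \<in> K \<longleftrightarrow> (\<forall>s\<in>T. ({s}, F) \<in> K)))"

definition closed_equiv_g :: "('v, 'a) signature \<Rightarrow> ('v, 'a) gteam set \<Rightarrow> bool" where
  "closed_equiv_g \<sigma> K \<longleftrightarrow>
     (\<forall>T S. T \<in> K \<and> S \<in> gteams \<sigma> \<and> gt_equiv \<sigma> T S \<longrightarrow> S \<in> K)"

definition flat_g :: "('v, 'a) signature \<Rightarrow> ('v, 'a) gteam set \<Rightarrow> bool" where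
  "flat_g \<sigma> K \<longleftrightarrow>
     (\<forall>T\<in>gteams \<sigma>. T \<in> K \<longleftrightarrow> (\<forall>p\<in>T. {p} \<in> K))"

end

theory Submission
  imports Defs
begin

text \<open>Both satisfaction relations are flat: a team satisfies a formula iff each of its points, an
  assignment together with a system of functions, does. The truth of a formula at a point depends
  on the system only up to \<open>\<sim>\<close>, because interventions on \<open>\<sim>\<close>-equivalent systems compatible with
  the same assignment produce the same assignment. Hence definable classes are flat and closed
  under equivalence. Conversely, such a class is determined by the \<open>\<sim>\<close>-closed set of its
  singleton points, and this finite set is defined by the disjunction of the characteristic
  formulas of its elements. A point \<open>(s, F)\<close> is characterised up to \<open>\<sim>\<close> by the values of \<open>s\<close>
  together with the value each variable \<open>V\<close> takes under every intervention on all the other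
  variables: these responses reproduce the non-constant mechanisms of \<open>F\<close>, and every other
  variable keeps its actual value under all of them.\<close>

section \<open>Flatness\<close>

fun sat_point :: "('v \<Rightarrow> 'a) \<Rightarrow> ('v, 'a) sysf \<Rightarrow> ('v, 'a) CO \<Rightarrow> bool" where
  "sat_point s F (Eq X x) \<longleftrightarrow> s X = x"
| "sat_point s F (Neg a) \<longleftrightarrow> \<not> sat_point s F a"
| "sat_point s F (Conj a b) \<longleftrightarrow> sat_point s F a \<and> sat_point s F b"
| "sat_point s F (Disj a b) \<longleftrightarrow> sat_point s F a \<or> sat_point s F b"
| "sat_point s F (Cf xs a) \<longleftrightarrow> \<not> consistent xs \<or> sat_point (interv F xs s) (restr_sys F xs) a"

lemma sat_c_iff_pointwise: "sat_c T \<phi> \<longleftrightarrow> (\<forall>s\<in>fst T. sat_point s (snd T) \<phi>)"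
proof (induction \<phi> arbitrary: T)
  case (Disj a b)
  show ?case
  proof
    assume "sat_c T (Disj a b)"
    then obtain T1 T2 where h: "csubteam T1 T" "csubteam T2 T" "fst T1 \<union> fst T2 = fst T"
      "sat_c T1 a" "sat_c T2 b" by auto
    show "\<forall>s\<in>fst T. sat_point s (snd T) (Disj a b)"
    proof
      fix s assume "s \<in> fst T"
      then have "s \<in> fst T1 \<or> s \<in> fst T2" using h(3) by auto
      then show "sat_point s (snd T) (Disj a b)"
        using h Disj.IH[of T1] Disj.IH[of T2] unfolding csubteam_def by auto
    qed
  next
    assume A: "\<forall>s\<in>fst T. sat_point s (snd T) (Disj a b)"
    let ?T1 = "({s\<in>fst T. sat_point s (snd T) a}, snd T)"
    let ?T2 = "({s\<in>fst T. sat_point s (snd T) b}, snd T)"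
    have "csubteam ?T1 T" "csubteam ?T2 T" "fst ?T1 \<union> fst ?T2 = fst T"
      using A by (auto simp: csubteam_def)
    moreover have "sat_c ?T1 a" "sat_c ?T2 b" using Disj.IH by auto
    ultimately show "sat_c T (Disj a b)" by (auto simp del: fst_conv snd_conv)
  qed
next
  case (Cf xs a)
  show ?case
    using Cf.IH[of "cinterv T xs"] by (auto simp: cinterv_def norm_ct_def)
qed auto

lemma sat_g_iff_pointwise: "sat_g T \<phi> \<longleftrightarrow> (\<forall>(s, F)\<in>T. sat_point s F \<phi>)"
proof (induction \<phi> arbitrary: T)
  case (Disj a b)
  show ?case
  proof
    assume "sat_g T (Disj a b)"
    then show "\<forall>(s, F)\<in>T. sat_point s F (Disj a b)" using Disj.IH by fastforce
  next
    assume A: "\<forall>(s, F)\<in>T. sat_point s F (Disj a b)"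
    let ?T1 = "{(s, F)\<in>T. sat_point s F a}"
    let ?T2 = "{(s, F)\<in>T. sat_point s F b}"
    have "T = ?T1 \<union> ?T2" using A by auto
    moreover have "sat_g ?T1 a" "sat_g ?T2 b" using Disj.IH by auto
    ultimately show "sat_g T (Disj a b)" by (auto simp del: Un_iff)
  qed
next
  case (Cf xs a)
  show ?case
    using Cf.IH[of "ginterv T xs"] by (auto simp: ginterv_def)
qed auto

section \<open>Interventions\<close>

lemma systemsD:
  assumes "F \<in> systems \<sigma>"
  shows "En F \<subseteq> Dom \<sigma>"
    and "V \<in> En F \<Longrightarrow> PA F V \<subseteq> Dom \<sigma> - {V}"
    and "V \<in> En F \<Longrightarrow> Fn F V \<in> PiE (PiE (PA F V) (Rng \<sigma>)) (\<lambda>_. Rng \<sigma> V)"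
    and "V \<notin> En F \<Longrightarrow> PA F V = {}"
    and "V \<notin> En F \<Longrightarrow> Fn F V = (\<lambda>_. undefined)"
    and "acyclic (graph_edges F)"
  using assms unfolding systems_def is_sys_def by auto

lemma wf_graph_edges:
  assumes "wf_sig \<sigma>" "F \<in> systems \<sigma>"
  shows "wf (graph_edges F)"
proof (rule finite_acyclic_wf)
  have "graph_edges F \<subseteq> Dom \<sigma> \<times> Dom \<sigma>"
    using systemsD(1,2)[OF assms(2)] unfolding graph_edges_def by blast
  then show "finite (graph_edges F)"
    using assms(1) unfolding wf_sig_def by (meson finite_SigmaI finite_subset)
  show "acyclic (graph_edges F)" using systemsD(6)[OF assms(2)] .
qed

lemma restrict_assignment:
  "u \<in> assignments \<sigma> \<Longrightarrow> A \<subseteq> Dom \<sigma> \<Longrightarrow> restrict u A \<in> PiE A (Rng \<sigma>)"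
  unfolding assignments_def by (auto simp: restrict_PiE_iff PiE_mem)

definition interv_spec :: "('v, 'a) sysf \<Rightarrow> ('v \<times> 'a) list \<Rightarrow> ('v \<Rightarrow> 'a) \<Rightarrow> ('v \<Rightarrow> 'a) \<Rightarrow> bool" where
  "interv_spec F xs s t \<longleftrightarrow> (\<forall>(X, x)\<in>set xs. t X = x) \<and>
      (\<forall>V. V \<notin> En F \<and> V \<notin> ivars xs \<longrightarrow> t V = s V) \<and>
      (\<forall>V\<in>En F. V \<notin> ivars xs \<longrightarrow> t V = Fn F V (restrict t (PA F V)))"

lemma interv_specD:
  assumes "interv_spec F xs s t"
  shows "(X, x) \<in> set xs \<Longrightarrow> t X = x"
    and "V \<notin> En F \<Longrightarrow> V \<notin> ivars xs \<Longrightarrow> t V = s V"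
    and "V \<in> En F \<Longrightarrow> V \<notin> ivars xs \<Longrightarrow> t V = Fn F V (restrict t (PA F V))"
  using assms unfolding interv_spec_def by auto

lemma interv_spec_unique:
  assumes wf: "wf (graph_edges F)" and t1: "interv_spec F xs s t1" and t2: "interv_spec F xs s t2"
  shows "t1 = t2"
proof
  fix V show "t1 V = t2 V"
    using wf
  proof (induction V rule: wf_induct_rule)
    case (less V)
    consider (iv) x where "(V, x) \<in> set xs" | (en) "V \<in> En F" "V \<notin> ivars xs"
      | (ex) "V \<notin> En F" "V \<notin> ivars xs"
      unfolding ivars_def by force
    then show ?case
    proof cases
      case en
      have "restrict t1 (PA F V) = restrict t2 (PA F V)"
        using less en(1) by (auto simp: graph_edges_def)
      then show ?thesis using interv_specD(3)[OF t1 en] interv_specD(3)[OF t2 en] by simp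
    qed (use interv_specD[OF t1] interv_specD[OF t2] in auto)
  qed
qed

lemma interv_spec_exists:
  assumes wf: "wf (graph_edges F)" and c: "consistent xs"
  shows "\<exists>t. interv_spec F xs s t"
proof -
  define H where "H = (\<lambda>f V. if V \<in> ivars xs then the (map_of xs V)
      else if V \<in> En F then Fn F V (restrict f (PA F V)) else s V)"
  define t where "t = wfrec (graph_edges F) H"
  have t_eq: "t V = H (cut t (graph_edges F) V) V" for V
    unfolding t_def by (rule wfrec[OF wf])
  have "interv_spec F xs s t"
    unfolding interv_spec_def
  proof (intro conjI allI ballI impI)
    fix p assume p: "p \<in> set xs"
    obtain X x where px: "p = (X, x)" by force
    then have X: "X \<in> ivars xs" using p unfolding ivars_def by force
    then obtain y where y: "map_of xs X = Some y"
      unfolding ivars_def by (metis map_of_eq_None_iff not_None_eq)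
    then have "y = x" using c p px map_of_SomeD unfolding consistent_def by fastforce
    then show "case p of (X, x) \<Rightarrow> t X = x"
      using px t_eq[of X] y X unfolding H_def by simp
  next
    fix V assume "V \<notin> En F \<and> V \<notin> ivars xs"
    then show "t V = s V" using t_eq[of V] unfolding H_def by simp
  next
    fix V assume V: "V \<in> En F" "V \<notin> ivars xs"
    have "restrict (cut t (graph_edges F) V) (PA F V) = restrict t (PA F V)"
      using V by (auto simp: cut_apply graph_edges_def)
    then show "t V = Fn F V (restrict t (PA F V))"
      using t_eq[of V] V unfolding H_def by simp
  qed
  then show ?thesis by blast
qed

lemma interv_spec_interv:
  assumes "wf_sig \<sigma>" "F \<in> systems \<sigma>" "consistent xs"
  shows "interv_spec F xs s (interv F xs s)"
proof -
  have wf: "wf (graph_edges F)" using wf_graph_edges[OF assms(1,2)] .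
  then have "\<exists>!t. interv_spec F xs s t"
    using interv_spec_exists[OF wf assms(3)] interv_spec_unique by blast
  then show ?thesis unfolding interv_def interv_spec_def[symmetric] by (rule theI')
qed

lemma interv_eqI:
  assumes "wf_sig \<sigma>" "F \<in> systems \<sigma>" "interv_spec F xs s t"
  shows "interv F xs s = t"
  unfolding interv_def interv_spec_def[symmetric]
  using assms interv_spec_unique[OF wf_graph_edges[OF assms(1,2)]] by blast

lemma interv_in_assignments:
  assumes sig: "wf_sig \<sigma>" and F: "F \<in> systems \<sigma>" and s: "s \<in> assignments \<sigma>"
    and c: "consistent xs" and xs: "\<forall>(X, x)\<in>set xs. X \<in> Dom \<sigma> \<and> x \<in> Rng \<sigma> X"
  shows "interv F xs s \<in> assignments \<sigma>"
proof -
  let ?t = "interv F xs s"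
  note spec = interv_specD[OF interv_spec_interv[OF sig F c]]
  have iv: "ivars xs \<subseteq> Dom \<sigma>" using xs unfolding ivars_def by auto
  have "?t V \<in> Rng \<sigma> V" if "V \<in> Dom \<sigma>" for V
    using wf_graph_edges[OF sig F] that
  proof (induction V rule: wf_induct_rule)
    case (less V)
    consider (iv) x where "(V, x) \<in> set xs" | (en) "V \<in> En F" "V \<notin> ivars xs"
      | (ex) "V \<notin> En F" "V \<notin> ivars xs"
      unfolding ivars_def by force
    then show ?case
    proof cases
      case iv
      then show ?thesis using spec(1) xs by fastforce
    next
      case en
      have "?t X \<in> Rng \<sigma> X" if "X \<in> PA F V" for X
        using less that en(1) systemsD(2)[OF F en(1)] by (auto simp: graph_edges_def)
      then have "restrict ?t (PA F V) \<in> PiE (PA F V) (Rng \<sigma>)"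
        by (simp add: restrict_PiE_iff)
      then show ?thesis
        using spec(3)[OF en] PiE_mem[OF systemsD(3)[OF F en(1)]] by simp
    next
      case ex
      then show ?thesis using spec(2) s less.prems unfolding assignments_def by (simp add: PiE_mem)
    qed
  qed
  moreover have "?t V = undefined" if "V \<notin> Dom \<sigma>" for V
  proof -
    have "V \<notin> En F" "V \<notin> ivars xs" using systemsD(1)[OF F] iv that by auto
    then have "?t V = s V" by (rule spec(2))
    also have "s V = undefined" using s that unfolding assignments_def by (rule PiE_arb)
    finally show ?thesis .
  qed
  ultimately show ?thesis unfolding assignments_def by (rule PiE_I)
qed

lemma restr_sys_in_systems:
  assumes F: "F \<in> systems \<sigma>"
  shows "restr_sys F xs \<in> systems \<sigma>"
proof -
  have "graph_edges (restr_sys F xs) \<subseteq> graph_edges F"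
    unfolding graph_edges_def restr_sys_def by auto
  then have "acyclic (graph_edges (restr_sys F xs))"
    using systemsD(6)[OF F] acyclic_subset by blast
  then show ?thesis
    using systemsD(1-3)[OF F] unfolding systems_def is_sys_def restr_sys_def by auto
qed

lemma compatible_interv:
  assumes "wf_sig \<sigma>" "F \<in> systems \<sigma>" "consistent xs"
  shows "compatible (interv F xs s) (restr_sys F xs)"
  using interv_specD(3)[OF interv_spec_interv[OF assms]]
  unfolding compatible_def restr_sys_def by auto

section \<open>Invariance under equivalence of systems\<close>

lemma PiE_extend:
  assumes g: "g \<in> PiE A R" and AB: "A \<subseteq> B" and ne: "\<forall>x\<in>B. R x \<noteq> {}"
  shows "\<exists>w\<in>PiE B R. restrict w A = g"
proof -
  have "PiE B R \<noteq> {}" using ne by (simp add: PiE_eq_empty_iff)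
  then obtain w0 where w0: "w0 \<in> PiE B R" by blast
  define w where "w = (\<lambda>x. if x \<in> A then g x else w0 x)"
  have "w \<in> PiE B R"
  proof (rule PiE_I)
    show "w x \<in> R x" if "x \<in> B" for x
      using that PiE_mem[OF g] PiE_mem[OF w0] unfolding w_def by auto
    show "w x = undefined" if "x \<notin> B" for x
      using that AB PiE_arb[OF w0] unfolding w_def by auto
  qed
  moreover have "restrict w A = g"
    using PiE_arb[OF g] unfolding w_def by (auto simp: restrict_def)
  ultimately show ?thesis by blast
qed

lemma ball_PiE_restrict:
  assumes "A \<subseteq> B" "\<forall>x\<in>B. R x \<noteq> {}"
  shows "(\<forall>g\<in>PiE A R. P g) \<longleftrightarrow> (\<forall>w\<in>PiE B R. P (restrict w A))"
proof
  assume "\<forall>g\<in>PiE A R. P g"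
  moreover have "restrict w A \<in> PiE A R" if "w \<in> PiE B R" for w
    using that assms(1) by (auto simp: restrict_PiE_iff PiE_mem)
  ultimately show "\<forall>w\<in>PiE B R. P (restrict w A)" by blast
next
  assume "\<forall>w\<in>PiE B R. P (restrict w A)"
  then show "\<forall>g\<in>PiE A R. P g" using PiE_extend[OF _ assms] by metis
qed

definition assignments_but :: "('v, 'a) signature \<Rightarrow> 'v \<Rightarrow> ('v \<Rightarrow> 'a) set" where
  "assignments_but \<sigma> V = PiE (Dom \<sigma> - {V}) (Rng \<sigma>)"

lemma restrict_assignments_but:
  "w \<in> assignments_but \<sigma> V \<Longrightarrow> A \<subseteq> Dom \<sigma> - {V} \<Longrightarrow> restrict w A \<in> PiE A (Rng \<sigma>)"
  unfolding assignments_but_def by (auto simp: restrict_PiE_iff PiE_mem)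

lemma ball_assignments_but_restrict:
  assumes "wf_sig \<sigma>" "A \<subseteq> Dom \<sigma> - {V}"
  shows "(\<forall>g\<in>PiE A (Rng \<sigma>). P g) \<longleftrightarrow> (\<forall>w\<in>assignments_but \<sigma> V. P (restrict w A))"
  unfolding assignments_but_def
  using assms by (intro ball_PiE_restrict) (auto simp: wf_sig_def)

lemma finite_assignments_but: "wf_sig \<sigma> \<Longrightarrow> finite (assignments_but \<sigma> V)"
  unfolding assignments_but_def wf_sig_def by (intro finite_PiE) auto

lemma fun_sim_iff_assignments_but:
  assumes sig: "wf_sig \<sigma>" and F: "F \<in> systems \<sigma>" and G: "G \<in> systems \<sigma>"
    and "V \<in> En F" "V \<in> En G"
  shows "fun_sim \<sigma> F G V \<longleftrightarrow>
    (\<forall>w\<in>assignments_but \<sigma> V. Fn F V (restrict w (PA F V)) = Fn G V (restrict w (PA G V)))"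
proof -
  have "PA F V \<union> PA G V \<subseteq> Dom \<sigma> - {V}"
    using systemsD(2)[OF F assms(4)] systemsD(2)[OF G assms(5)] by blast
  then have "fun_sim \<sigma> F G V \<longleftrightarrow> (\<forall>w\<in>assignments_but \<sigma> V.
      Fn F V (restrict (restrict w (PA F V \<union> PA G V)) (PA F V)) =
      Fn G V (restrict (restrict w (PA F V \<union> PA G V)) (PA G V)))"
    unfolding fun_sim_def by (rule ball_assignments_but_restrict[OF sig])
  then show ?thesis by simp
qed

lemma sys_sim_refl: "sys_sim \<sigma> F F"
  unfolding sys_sim_def fun_sim_def by auto

lemma sys_sim_sym: "sys_sim \<sigma> F G \<Longrightarrow> sys_sim \<sigma> G F"
  unfolding sys_sim_def fun_sim_def by (auto simp: Un_commute)

lemma sys_sim_trans: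
  assumes sig: "wf_sig \<sigma>" and F: "F \<in> systems \<sigma>" and G: "G \<in> systems \<sigma>" and H: "H \<in> systems \<sigma>"
    and FG: "sys_sim \<sigma> F G" and GH: "sys_sim \<sigma> G H"
  shows "sys_sim \<sigma> F H"
  unfolding sys_sim_def
proof (intro conjI ballI)
  show "En F - Cn \<sigma> F = En H - Cn \<sigma> H" using FG GH unfolding sys_sim_def by auto
  fix V assume V: "V \<in> En F - Cn \<sigma> F"
  then have "V \<in> En G" "V \<in> En H" "fun_sim \<sigma> F G V" "fun_sim \<sigma> G H V"
    using FG GH unfolding sys_sim_def by auto
  then show "fun_sim \<sigma> F H V"
    using V fun_sim_iff_assignments_but[OF sig] F G H by (metis DiffD1)
qed

lemma Cn_restr_sys: "Cn \<sigma> (restr_sys F xs) = Cn \<sigma> F - ivars xs"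
  unfolding Cn_def restr_sys_def by auto

lemma sys_sim_restr_sys:
  assumes "sys_sim \<sigma> F G"
  shows "sys_sim \<sigma> (restr_sys F xs) (restr_sys G xs)"
  using assms unfolding sys_sim_def fun_sim_def Cn_restr_sys by (auto simp: restr_sys_def)

lemma Cn_apply_eq:
  assumes "V \<in> Cn \<sigma> F" "F \<in> systems \<sigma>" "u \<in> assignments \<sigma>" "u' \<in> assignments \<sigma>"
  shows "Fn F V (restrict u (PA F V)) = Fn F V (restrict u' (PA F V))"
proof -
  have "V \<in> En F" using assms(1) unfolding Cn_def by blast
  then have "PA F V \<subseteq> Dom \<sigma>" using systemsD(2)[OF assms(2)] by blast
  then show ?thesis
    using assms(1) restrict_assignment[OF assms(3)] restrict_assignment[OF assms(4)]
    unfolding Cn_def by fastforce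
qed

lemma interv_fixes_non_mechanisms:
  assumes sig: "wf_sig \<sigma>" and F: "F \<in> systems \<sigma>" and t: "t \<in> assignments \<sigma>"
    and cF: "compatible t F" and c: "consistent xs"
    and xs: "\<forall>(X, x)\<in>set xs. X \<in> Dom \<sigma> \<and> x \<in> Rng \<sigma> X"
    and V: "V \<notin> En F - Cn \<sigma> F" "V \<notin> ivars xs"
  shows "interv F xs t V = t V"
proof (cases "V \<in> En F")
  case VE: True
  then have Cn: "V \<in> Cn \<sigma> F" using V(1) by blast
  have "interv F xs t V = Fn F V (restrict (interv F xs t) (PA F V))"
    by (rule interv_specD(3)[OF interv_spec_interv[OF sig F c] VE V(2)])
  also have "\<dots> = Fn F V (restrict t (PA F V))"
    by (rule Cn_apply_eq[OF Cn F interv_in_assignments[OF sig F t c xs] t])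
  also have "\<dots> = t V" using cF VE unfolding compatible_def by simp
  finally show ?thesis .
qed (rule interv_specD(2)[OF interv_spec_interv[OF sig F c] _ V(2)])

lemma interv_sys_sim:
  assumes sig: "wf_sig \<sigma>" and F: "F \<in> systems \<sigma>" and G: "G \<in> systems \<sigma>"
    and t: "t \<in> assignments \<sigma>" and cF: "compatible t F" and cG: "compatible t G"
    and FG: "sys_sim \<sigma> F G" and c: "consistent xs"
    and xs: "\<forall>(X, x)\<in>set xs. X \<in> Dom \<sigma> \<and> x \<in> Rng \<sigma> X"
  shows "interv G xs t = interv F xs t"
proof (rule interv_eqI[OF sig G])
  let ?t = "interv F xs t"
  have E: "En F - Cn \<sigma> F = En G - Cn \<sigma> G" using FG unfolding sys_sim_def by blast
  note spec = interv_specD[OF interv_spec_interv[OF sig F c]]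
  note unchanged = interv_fixes_non_mechanisms[OF sig F t cF c xs]
  show "interv_spec G xs t ?t"
    unfolding interv_spec_def
  proof (intro conjI allI ballI impI)
    fix p assume "p \<in> set xs"
    then show "case p of (X, x) \<Rightarrow> ?t X = x" using spec(1) by (cases p) auto
  next
    fix V assume "V \<notin> En G \<and> V \<notin> ivars xs"
    then show "?t V = t V" using unchanged E by blast
  next
    fix V assume VG: "V \<in> En G" and V: "V \<notin> ivars xs"
    show "?t V = Fn G V (restrict ?t (PA G V))"
    proof (cases "V \<in> Cn \<sigma> G")
      case True
      have "Fn G V (restrict ?t (PA G V)) = Fn G V (restrict t (PA G V))"
        by (rule Cn_apply_eq[OF True G interv_in_assignments[OF sig F t c xs] t])
      also have "\<dots> = t V" using cG VG unfolding compatible_def by simp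
      moreover have "V \<notin> En F - Cn \<sigma> F" unfolding E using True by blast
      then have "?t V = t V" by (rule unchanged[OF _ V])
      ultimately show ?thesis by simp
    next
      case False
      then have VF: "V \<in> En F - Cn \<sigma> F" unfolding E using VG by blast
      have "PA F V \<union> PA G V \<subseteq> Dom \<sigma>" using systemsD(2)[OF G VG] systemsD(2)[OF F] VF by blast
      then have "restrict ?t (PA F V \<union> PA G V) \<in> PiE (PA F V \<union> PA G V) (Rng \<sigma>)"
        by (rule restrict_assignment[OF interv_in_assignments[OF sig F t c xs]])
      moreover have "fun_sim \<sigma> F G V" using FG VF unfolding sys_sim_def by blast
      ultimately have "Fn F V (restrict ?t (PA F V)) = Fn G V (restrict ?t (PA G V))"
        unfolding fun_sim_def by (metis Un_Int_eq(1,2) restrict_restrict)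
      then show ?thesis using spec(3)[of V] VF V by simp
    qed
  qed
qed

lemma sat_point_sys_sim:
  assumes sig: "wf_sig \<sigma>"
  shows "F \<in> systems \<sigma> \<Longrightarrow> G \<in> systems \<sigma> \<Longrightarrow> t \<in> assignments \<sigma> \<Longrightarrow>
    compatible t F \<Longrightarrow> compatible t G \<Longrightarrow> sys_sim \<sigma> F G \<Longrightarrow> wf_form \<sigma> \<phi> \<Longrightarrow>
    sat_point t F \<phi> \<longleftrightarrow> sat_point t G \<phi>"
proof (induction \<phi> arbitrary: t F G)
  case (Cf xs a)
  note F = Cf.prems(1) and G = Cf.prems(2) and t = Cf.prems(3)
  show ?case
  proof (cases "consistent xs")
    case c: True
    have xs: "\<forall>(X, x)\<in>set xs. X \<in> Dom \<sigma> \<and> x \<in> Rng \<sigma> X" using Cf.prems(7) by simp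
    let ?t = "interv F xs t"
    have same: "interv G xs t = ?t" by (rule interv_sys_sim[OF sig Cf.prems(1-6) c xs])
    have "sat_point ?t (restr_sys F xs) a \<longleftrightarrow> sat_point ?t (restr_sys G xs) a"
    proof (rule Cf.IH)
      show "restr_sys F xs \<in> systems \<sigma>" "restr_sys G xs \<in> systems \<sigma>"
        using F G by (blast intro: restr_sys_in_systems)+
      show "?t \<in> assignments \<sigma>" by (rule interv_in_assignments[OF sig F t c xs])
      show "compatible ?t (restr_sys F xs)" by (rule compatible_interv[OF sig F c])
      show "compatible ?t (restr_sys G xs)"
        using compatible_interv[OF sig G c, of t] unfolding same .
      show "sys_sim \<sigma> (restr_sys F xs) (restr_sys G xs)" by (rule sys_sim_restr_sys[OF Cf.prems(6)])
      show "wf_form \<sigma> a" using Cf.prems(7) by simp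
    qed
    then show ?thesis using same c by simp
  qed simp
qed auto

section \<open>Characteristic formulas\<close>

definition response :: "('v, 'a) sysf \<Rightarrow> ('v \<Rightarrow> 'a) \<Rightarrow> 'v \<Rightarrow> ('v \<Rightarrow> 'a) \<Rightarrow> 'a" where
  "response G t V w = (if V \<in> En G then Fn G V (restrict w (PA G V)) else t V)"

lemma response_constant_iff:
  assumes sig: "wf_sig \<sigma>" and G: "G \<in> systems \<sigma>" and t: "t \<in> assignments \<sigma>"
    and cG: "compatible t G"
  shows "(\<forall>w\<in>assignments_but \<sigma> V. response G t V w = t V) \<longleftrightarrow> V \<notin> En G - Cn \<sigma> G"
proof (cases "V \<in> En G")
  case VG: True
  have PA: "PA G V \<subseteq> Dom \<sigma> - {V}" by (rule systemsD(2)[OF G VG])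
  have tV: "Fn G V (restrict t (PA G V)) = t V" using cG VG unfolding compatible_def by simp
  have "(\<forall>w\<in>assignments_but \<sigma> V. response G t V w = t V) \<longleftrightarrow>
      (\<forall>g\<in>PiE (PA G V) (Rng \<sigma>). Fn G V g = t V)"
    using ball_assignments_but_restrict[OF sig PA] VG unfolding response_def by simp
  also have "\<dots> \<longleftrightarrow> V \<in> Cn \<sigma> G"
  proof
    assume "\<forall>g\<in>PiE (PA G V) (Rng \<sigma>). Fn G V g = t V"
    then show "V \<in> Cn \<sigma> G" using VG unfolding Cn_def by blast
  next
    assume "V \<in> Cn \<sigma> G"
    moreover have "restrict t (PA G V) \<in> PiE (PA G V) (Rng \<sigma>)"
      using restrict_assignment[OF t] PA by blast
    ultimately show "\<forall>g\<in>PiE (PA G V) (Rng \<sigma>). Fn G V g = t V"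
      using tV unfolding Cn_def by fastforce
  qed
  finally show ?thesis using VG by blast
qed (simp add: response_def)

lemma response_nonconstant:
  assumes sig: "wf_sig \<sigma>" and F: "F \<in> systems \<sigma>" and G: "G \<in> systems \<sigma>"
    and t: "t \<in> assignments \<sigma>" and cG: "compatible t G" and V: "V \<in> En F - Cn \<sigma> F"
    and resp: "\<forall>w\<in>assignments_but \<sigma> V. response G t V w = Fn F V (restrict w (PA F V))"
  shows "V \<in> En G - Cn \<sigma> G"
proof (rule ccontr)
  assume "V \<notin> En G - Cn \<sigma> G"
  then have "\<forall>w\<in>assignments_but \<sigma> V. response G t V w = t V"
    using response_constant_iff[OF sig G t cG] by blast
  then have "\<forall>w\<in>assignments_but \<sigma> V. Fn F V (restrict w (PA F V)) = t V"
    using resp by auto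
  moreover have "PA F V \<subseteq> Dom \<sigma> - {V}" using systemsD(2)[OF F] V by blast
  ultimately have "\<forall>g\<in>PiE (PA F V) (Rng \<sigma>). Fn F V g = t V"
    by (subst ball_assignments_but_restrict[OF sig])
  then have "V \<in> Cn \<sigma> F" using V unfolding Cn_def by blast
  then show False using V by blast
qed

lemma sys_sim_iff_response:
  assumes sig: "wf_sig \<sigma>" and F: "F \<in> systems \<sigma>" and G: "G \<in> systems \<sigma>"
    and t: "t \<in> assignments \<sigma>" and cG: "compatible t G"
  shows "sys_sim \<sigma> G F \<longleftrightarrow>
    (\<forall>V\<in>En F - Cn \<sigma> F. \<forall>w\<in>assignments_but \<sigma> V.
        response G t V w = Fn F V (restrict w (PA F V))) \<and>
    (\<forall>V\<in>Dom \<sigma> - (En F - Cn \<sigma> F). \<forall>w\<in>assignments_but \<sigma> V. response G t V w = t V)"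
    (is "_ \<longleftrightarrow> ?mech \<and> ?const")
proof
  assume GF: "sys_sim \<sigma> G F"
  then have E: "En G - Cn \<sigma> G = En F - Cn \<sigma> F" unfolding sys_sim_def by blast
  have ?mech
  proof (intro ballI)
    fix V w assume V: "V \<in> En F - Cn \<sigma> F" and w: "w \<in> assignments_but \<sigma> V"
    have VG: "V \<in> En G - Cn \<sigma> G" using V by (simp add: E)
    then have "fun_sim \<sigma> G F V" using GF unfolding sys_sim_def by blast
    then show "response G t V w = Fn F V (restrict w (PA F V))"
      using fun_sim_iff_assignments_but[OF sig G F] V VG w unfolding response_def by auto
  qed
  moreover have ?const
    using response_constant_iff[OF sig G t cG] unfolding E[symmetric] by blast
  ultimately show "?mech \<and> ?const" ..
next
  assume resp: "?mech \<and> ?const"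
  have E: "En G - Cn \<sigma> G = En F - Cn \<sigma> F"
  proof
    show "En F - Cn \<sigma> F \<subseteq> En G - Cn \<sigma> G"
      using response_nonconstant[OF sig F G t cG] resp by blast
    show "En G - Cn \<sigma> G \<subseteq> En F - Cn \<sigma> F"
      using response_constant_iff[OF sig G t cG] resp systemsD(1)[OF G] by blast
  qed
  show "sys_sim \<sigma> G F"
    unfolding sys_sim_def
  proof (intro conjI ballI)
    fix V assume VG: "V \<in> En G - Cn \<sigma> G"
    then have VF: "V \<in> En F - Cn \<sigma> F" unfolding E .
    then have "\<forall>w\<in>assignments_but \<sigma> V. response G t V w = Fn F V (restrict w (PA F V))"
      using resp by blast
    moreover have "V \<in> En G" "V \<in> En F" using VG VF by blast+
    ultimately show "fun_sim \<sigma> G F V"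
      unfolding fun_sim_iff_assignments_but[OF sig G F \<open>V \<in> En G\<close> \<open>V \<in> En F\<close>] response_def
      by simp
  qed (rule E)
qed

definition list_of_set :: "'b set \<Rightarrow> 'b list" where
  "list_of_set A = (SOME xs. set xs = A)"

lemma set_list_of_set: "finite A \<Longrightarrow> set (list_of_set A) = A"
  unfolding list_of_set_def using finite_list by (metis (mono_tags) someI_ex)

definition falsum :: "('v, 'a) signature \<Rightarrow> ('v, 'a) CO" where
  "falsum \<sigma> = (let X = SOME X. X \<in> Dom \<sigma>; x = SOME x. x \<in> Rng \<sigma> X
     in Conj (Eq X x) (Neg (Eq X x)))"

lemma not_sat_point_falsum: "\<not> sat_point t G (falsum \<sigma>)"
  unfolding falsum_def Let_def by simp

lemma wf_form_falsum:
  assumes "wf_sig \<sigma>"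
  shows "wf_form \<sigma> (falsum \<sigma>)"
proof -
  have "Dom \<sigma> \<noteq> {}" using assms unfolding wf_sig_def by blast
  then have X: "(SOME X. X \<in> Dom \<sigma>) \<in> Dom \<sigma>" by (simp add: some_in_eq)
  then have "Rng \<sigma> (SOME X. X \<in> Dom \<sigma>) \<noteq> {}" using assms unfolding wf_sig_def by blast
  then show ?thesis using X unfolding falsum_def Let_def by (simp add: some_in_eq)
qed

definition Conjs :: "('v, 'a) signature \<Rightarrow> ('b \<Rightarrow> ('v, 'a) CO) \<Rightarrow> 'b set \<Rightarrow> ('v, 'a) CO" where
  "Conjs \<sigma> f A = foldr (\<lambda>a \<phi>. Conj (f a) \<phi>) (list_of_set A) (Neg (falsum \<sigma>))"

definition Disjs :: "('v, 'a) signature \<Rightarrow> ('b \<Rightarrow> ('v, 'a) CO) \<Rightarrow> 'b set \<Rightarrow> ('v, 'a) CO" where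
  "Disjs \<sigma> f A = foldr (\<lambda>a \<phi>. Disj (f a) \<phi>) (list_of_set A) (falsum \<sigma>)"

lemma sat_point_Conjs:
  "finite A \<Longrightarrow> sat_point t G (Conjs \<sigma> f A) \<longleftrightarrow> (\<forall>a\<in>A. sat_point t G (f a))"
proof -
  have "sat_point t G (foldr (\<lambda>a \<phi>. Conj (f a) \<phi>) xs (Neg (falsum \<sigma>))) \<longleftrightarrow>
    (\<forall>a\<in>set xs. sat_point t G (f a))" for xs
    by (induction xs) (simp_all add: not_sat_point_falsum)
  then show "finite A \<Longrightarrow> ?thesis" unfolding Conjs_def by (simp add: set_list_of_set)
qed

lemma sat_point_Disjs:
  "finite A \<Longrightarrow> sat_point t G (Disjs \<sigma> f A) \<longleftrightarrow> (\<exists>a\<in>A. sat_point t G (f a))"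
proof -
  have "sat_point t G (foldr (\<lambda>a \<phi>. Disj (f a) \<phi>) xs (falsum \<sigma>)) \<longleftrightarrow>
    (\<exists>a\<in>set xs. sat_point t G (f a))" for xs
    by (induction xs) (simp_all add: not_sat_point_falsum)
  then show "finite A \<Longrightarrow> ?thesis" unfolding Disjs_def by (simp add: set_list_of_set)
qed

lemma wf_form_Conjs:
  assumes "wf_sig \<sigma>" "finite A" "\<forall>a\<in>A. wf_form \<sigma> (f a)"
  shows "wf_form \<sigma> (Conjs \<sigma> f A)"
proof -
  have "\<forall>a\<in>set xs. wf_form \<sigma> (f a) \<Longrightarrow> wf_form \<sigma> (foldr (\<lambda>a \<phi>. Conj (f a) \<phi>) xs (Neg (falsum \<sigma>)))"
    for xs by (induction xs) (simp_all add: wf_form_falsum[OF assms(1)])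
  then show ?thesis using assms(2,3) unfolding Conjs_def by (simp add: set_list_of_set)
qed

lemma wf_form_Disjs:
  assumes "wf_sig \<sigma>" "finite A" "\<forall>a\<in>A. wf_form \<sigma> (f a)"
  shows "wf_form \<sigma> (Disjs \<sigma> f A)"
proof -
  have "\<forall>a\<in>set xs. wf_form \<sigma> (f a) \<Longrightarrow> wf_form \<sigma> (foldr (\<lambda>a \<phi>. Disj (f a) \<phi>) xs (falsum \<sigma>))"
    for xs by (induction xs) (simp_all add: wf_form_falsum[OF assms(1)])
  then show ?thesis using assms(2,3) unfolding Disjs_def by (simp add: set_list_of_set)
qed

text \<open>If \<open>V\<close> is the only variable there is nothing to intervene on, and an empty intervention
  is not a well-formed formula.\<close>
definition Cf_others :: "('v, 'a) signature \<Rightarrow> 'v \<Rightarrow> ('v \<Rightarrow> 'a) \<Rightarrow> ('v, 'a) CO \<Rightarrow> ('v, 'a) CO" where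
  "Cf_others \<sigma> V w \<phi> = (if Dom \<sigma> - {V} = {} then \<phi>
     else Cf (map (\<lambda>X. (X, w X)) (list_of_set (Dom \<sigma> - {V}))) \<phi>)"

lemma sat_point_Cf_others_Eq:
  assumes sig: "wf_sig \<sigma>" and G: "G \<in> systems \<sigma>" and cG: "compatible t G"
  shows "sat_point t G (Cf_others \<sigma> V w (Eq V v)) \<longleftrightarrow> response G t V w = v"
proof (cases "Dom \<sigma> - {V} = {}")
  case True
  have "response G t V w = t V"
  proof (cases "V \<in> En G")
    case VG: True
    then have "PA G V = {}" using systemsD(2)[OF G VG] True by blast
    moreover have "restrict w {} = restrict t {}" by (simp add: restrict_def)
    ultimately show ?thesis using cG VG unfolding compatible_def response_def by simp
  qed (simp add: response_def)
  then show ?thesis using True unfolding Cf_others_def by simp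
next
  case False
  let ?xs = "map (\<lambda>X. (X, w X)) (list_of_set (Dom \<sigma> - {V}))"
  have xs: "set ?xs = (\<lambda>X. (X, w X)) ` (Dom \<sigma> - {V})"
    using sig unfolding wf_sig_def by (simp add: set_list_of_set)
  then have c: "consistent ?xs" and iv: "ivars ?xs = Dom \<sigma> - {V}"
    unfolding consistent_def ivars_def by force+
  note spec = interv_specD[OF interv_spec_interv[OF sig G c, of t]]
  have V: "V \<notin> ivars ?xs" using iv by blast
  have "interv G ?xs t V = response G t V w"
  proof (cases "V \<in> En G")
    case VG: True
    have "restrict (interv G ?xs t) (PA G V) = restrict w (PA G V)"
    proof (rule restrict_ext)
      fix X assume "X \<in> PA G V"
      then have "(X, w X) \<in> set ?xs" using systemsD(2)[OF G VG] xs by blast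
      then show "interv G ?xs t X = w X" by (rule spec(1))
    qed
    then show ?thesis using spec(3)[OF VG V] VG unfolding response_def by simp
  next
    case False
    then show ?thesis using spec(2)[OF False V] unfolding response_def by simp
  qed
  moreover have "Cf_others \<sigma> V w (Eq V v) = Cf ?xs (Eq V v)"
    using False unfolding Cf_others_def by (rule if_not_P)
  ultimately show ?thesis using c by simp
qed

lemma wf_form_Cf_others:
  assumes "w \<in> assignments_but \<sigma> V" "wf_form \<sigma> \<phi>" "wf_sig \<sigma>"
  shows "wf_form \<sigma> (Cf_others \<sigma> V w \<phi>)"
proof (cases "Dom \<sigma> - {V} = {}")
  case False
  let ?l = "list_of_set (Dom \<sigma> - {V})"
  have l: "set ?l = Dom \<sigma> - {V}"
    using assms(3) unfolding wf_sig_def by (simp add: set_list_of_set)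
  then have "?l \<noteq> []" using False by (metis set_empty)
  moreover have "\<forall>(X, x)\<in>set (map (\<lambda>X. (X, w X)) ?l). X \<in> Dom \<sigma> \<and> x \<in> Rng \<sigma> X"
    unfolding set_map l using PiE_mem[OF assms(1)[unfolded assignments_but_def]] by auto
  moreover have "Cf_others \<sigma> V w \<phi> = Cf (map (\<lambda>X. (X, w X)) ?l) \<phi>"
    using False unfolding Cf_others_def by (rule if_not_P)
  ultimately show ?thesis using assms(2) by simp
qed (simp add: Cf_others_def assms(2))

lemma finite_non_constant: "wf_sig \<sigma> \<Longrightarrow> F \<in> systems \<sigma> \<Longrightarrow> finite (En F - Cn \<sigma> F)"
  using systemsD(1) unfolding wf_sig_def by (meson finite_Diff finite_subset)

definition mechanism_formula :: "('v, 'a) signature \<Rightarrow> ('v, 'a) sysf \<Rightarrow> 'v \<Rightarrow> ('v, 'a) CO" where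
  "mechanism_formula \<sigma> F V =
     Conjs \<sigma> (\<lambda>w. Cf_others \<sigma> V w (Eq V (Fn F V (restrict w (PA F V))))) (assignments_but \<sigma> V)"

text \<open>The language cannot compare the values of \<open>V\<close> before and after an intervention
  directly, hence the disjunction over the possible values of \<open>V\<close>.\<close>
definition unaffected_formula :: "('v, 'a) signature \<Rightarrow> 'v \<Rightarrow> ('v, 'a) CO" where
  "unaffected_formula \<sigma> V =
     Disjs \<sigma> (\<lambda>v. Conj (Eq V v) (Conjs \<sigma> (\<lambda>w. Cf_others \<sigma> V w (Eq V v)) (assignments_but \<sigma> V)))
       (Rng \<sigma> V)"

definition char_formula :: "('v, 'a) signature \<Rightarrow> ('v \<Rightarrow> 'a) \<Rightarrow> ('v, 'a) sysf \<Rightarrow> ('v, 'a) CO" where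
  "char_formula \<sigma> s F =
     Conj (Conjs \<sigma> (\<lambda>X. Eq X (s X)) (Dom \<sigma>))
       (Conj (Conjs \<sigma> (mechanism_formula \<sigma> F) (En F - Cn \<sigma> F))
          (Conjs \<sigma> (unaffected_formula \<sigma>) (Dom \<sigma> - (En F - Cn \<sigma> F))))"

lemma sat_point_mechanism_formula:
  assumes "wf_sig \<sigma>" "G \<in> systems \<sigma>" "compatible t G"
  shows "sat_point t G (mechanism_formula \<sigma> F V) \<longleftrightarrow>
    (\<forall>w\<in>assignments_but \<sigma> V. response G t V w = Fn F V (restrict w (PA F V)))"
  unfolding mechanism_formula_def
  by (simp add: sat_point_Conjs finite_assignments_but sat_point_Cf_others_Eq assms)

lemma sat_point_unaffected_formula:
  assumes "wf_sig \<sigma>" "G \<in> systems \<sigma>" "compatible t G" "t \<in> assignments \<sigma>" "V \<in> Dom \<sigma>"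
  shows "sat_point t G (unaffected_formula \<sigma> V) \<longleftrightarrow>
    (\<forall>w\<in>assignments_but \<sigma> V. response G t V w = t V)"
proof -
  have "finite (Rng \<sigma> V)" using assms(1,5) unfolding wf_sig_def by blast
  moreover have "t V \<in> Rng \<sigma> V" using assms(4,5) unfolding assignments_def by (rule PiE_mem)
  ultimately show ?thesis
    unfolding unaffected_formula_def
    by (auto simp: sat_point_Conjs sat_point_Disjs finite_assignments_but
        sat_point_Cf_others_Eq assms)
qed

lemma sat_point_char_formula:
  assumes sig: "wf_sig \<sigma>" and F: "F \<in> systems \<sigma>" and G: "G \<in> systems \<sigma>"
    and s: "s \<in> assignments \<sigma>" and t: "t \<in> assignments \<sigma>" and cG: "compatible t G"
  shows "sat_point t G (char_formula \<sigma> s F) \<longleftrightarrow> t = s \<and> sys_sim \<sigma> G F"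
proof -
  have fin: "finite (Dom \<sigma>)" using sig unfolding wf_sig_def by blast
  have "sat_point t G (char_formula \<sigma> s F) \<longleftrightarrow> (\<forall>X\<in>Dom \<sigma>. t X = s X) \<and>
    (\<forall>V\<in>En F - Cn \<sigma> F. \<forall>w\<in>assignments_but \<sigma> V.
        response G t V w = Fn F V (restrict w (PA F V))) \<and>
    (\<forall>V\<in>Dom \<sigma> - (En F - Cn \<sigma> F). \<forall>w\<in>assignments_but \<sigma> V. response G t V w = t V)"
    unfolding char_formula_def using fin finite_non_constant[OF sig F]
    by (simp add: sat_point_Conjs sat_point_mechanism_formula sat_point_unaffected_formula
        sig G cG t)
  moreover have "(\<forall>X\<in>Dom \<sigma>. t X = s X) \<longleftrightarrow> t = s"
    using s t unfolding assignments_def by (auto intro: PiE_ext)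
  ultimately show ?thesis using sys_sim_iff_response[OF sig F G t cG] by simp
qed

lemma wf_form_char_formula:
  assumes sig: "wf_sig \<sigma>" and s: "s \<in> assignments \<sigma>" and F: "F \<in> systems \<sigma>"
  shows "wf_form \<sigma> (char_formula \<sigma> s F)"
proof -
  have fin: "finite (Dom \<sigma>)" and finR: "\<And>V. V \<in> Dom \<sigma> \<Longrightarrow> finite (Rng \<sigma> V)"
    using sig unfolding wf_sig_def by blast+
  have mech: "wf_form \<sigma> (mechanism_formula \<sigma> F V)" if V: "V \<in> En F - Cn \<sigma> F" for V
  proof -
    have "Fn F V (restrict w (PA F V)) \<in> Rng \<sigma> V" if "w \<in> assignments_but \<sigma> V" for w
      using PiE_mem[OF systemsD(3)[OF F] restrict_assignments_but[OF that systemsD(2)[OF F]]] V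
      by blast
    moreover have "V \<in> Dom \<sigma>" using systemsD(1)[OF F] V by blast
    ultimately show ?thesis
      unfolding mechanism_formula_def
      by (intro wf_form_Conjs[OF sig finite_assignments_but[OF sig]] ballI
          wf_form_Cf_others[OF _ _ sig]) simp_all
  qed
  have unaff: "wf_form \<sigma> (unaffected_formula \<sigma> V)" if V: "V \<in> Dom \<sigma>" for V
  proof -
    have "wf_form \<sigma> (Conjs \<sigma> (\<lambda>w. Cf_others \<sigma> V w (Eq V v)) (assignments_but \<sigma> V))"
      if "v \<in> Rng \<sigma> V" for v
      by (intro wf_form_Conjs[OF sig finite_assignments_but[OF sig]] ballI
          wf_form_Cf_others[OF _ _ sig]) (simp_all add: V that)
    then show ?thesis
      unfolding unaffected_formula_def by (intro wf_form_Disjs[OF sig finR[OF V]]) (simp add: V)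
  qed
  have "wf_form \<sigma> (Conjs \<sigma> (\<lambda>X. Eq X (s X)) (Dom \<sigma>))"
    using s unfolding assignments_def by (intro wf_form_Conjs[OF sig fin]) (simp add: PiE_mem)
  then show ?thesis
    unfolding char_formula_def using mech unaff fin finite_non_constant[OF sig F]
    by (simp add: wf_form_Conjs[OF sig])
qed

section \<open>Definable classes\<close>

lemma Sset_iff: "(s, F) \<in> Sset \<sigma> \<longleftrightarrow> s \<in> assignments \<sigma> \<and> F \<in> systems \<sigma> \<and> compatible s F"
  unfolding Sset_def by simp

lemma cteams_singleton_iff: "({s}, F) \<in> cteams \<sigma> \<longleftrightarrow> (s, F) \<in> Sset \<sigma>"
  unfolding cteams_def Sset_def by auto

lemma cteams_point_in_Sset: "(T, F) \<in> cteams \<sigma> \<Longrightarrow> s \<in> T \<Longrightarrow> (s, F) \<in> Sset \<sigma>"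
  unfolding cteams_def Sset_def by auto

lemma finite_assignments: "wf_sig \<sigma> \<Longrightarrow> finite (assignments \<sigma>)"
  unfolding assignments_def wf_sig_def by (intro finite_PiE) auto

lemma finite_systems:
  assumes sig: "wf_sig \<sigma>"
  shows "finite (systems \<sigma>)"
proof -
  let ?D = "Dom \<sigma>"
  let ?mechs = "insert (\<lambda>_. undefined) (\<Union>V\<in>?D. \<Union>P\<in>Pow ?D. PiE (PiE P (Rng \<sigma>)) (\<lambda>_. Rng \<sigma> V))"
  let ?PAs = "{p. \<forall>V. (V \<in> ?D \<longrightarrow> p V \<in> Pow ?D) \<and> (V \<notin> ?D \<longrightarrow> p V = {})}"
  let ?Fns = "{f. \<forall>V. (V \<in> ?D \<longrightarrow> f V \<in> ?mechs) \<and> (V \<notin> ?D \<longrightarrow> f V = (\<lambda>_. undefined))}"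
  have fin: "finite ?D" and finR: "\<And>V. V \<in> ?D \<Longrightarrow> finite (Rng \<sigma> V)"
    using sig unfolding wf_sig_def by blast+
  have "finite (PiE P (Rng \<sigma>))" if "P \<in> Pow ?D" for P
    using that fin finR by (intro finite_PiE) (auto intro: finite_subset)
  then have "finite ?mechs" using fin finR by (auto intro!: finite_PiE intro: finite_subset)
  then have "finite (Pow ?D \<times> ?PAs \<times> ?Fns)"
    using fin by (intro finite_cartesian_product finite_set_of_finite_funs) simp_all
  moreover have "systems \<sigma> \<subseteq> (\<lambda>(E, p, f). \<lparr>En = E, PA = p, Fn = f\<rparr>) ` (Pow ?D \<times> ?PAs \<times> ?Fns)"
  proof
    fix F assume F: "F \<in> systems \<sigma>"
    have "PA F V \<in> Pow ?D \<and> Fn F V \<in> ?mechs" if "V \<in> ?D" for V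
    proof (cases "V \<in> En F")
      case True
      then show ?thesis using systemsD(2,3)[OF F True] that by blast
    qed (simp add: systemsD(4,5)[OF F])
    moreover have "PA F V = {} \<and> Fn F V = (\<lambda>_. undefined)" if "V \<notin> ?D" for V
      using that systemsD(1,4,5)[OF F] by blast
    ultimately have "(En F, PA F, Fn F) \<in> Pow ?D \<times> ?PAs \<times> ?Fns"
      using systemsD(1)[OF F] by blast
    then show "F \<in> (\<lambda>(E, p, f). \<lparr>En = E, PA = p, Fn = f\<rparr>) ` (Pow ?D \<times> ?PAs \<times> ?Fns)"
      by (rule rev_image_eqI) simp
  qed
  ultimately show ?thesis by (rule finite_surj)
qed

lemma finite_Sset: "wf_sig \<sigma> \<Longrightarrow> finite (Sset \<sigma>)"
  by (rule finite_subset[OF _ finite_cartesian_product[OF finite_assignments finite_systems]])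
    (auto simp: Sset_def)

definition char_formula_set ::
    "('v, 'a) signature \<Rightarrow> (('v \<Rightarrow> 'a) \<times> ('v, 'a) sysf) set \<Rightarrow> ('v, 'a) CO" where
  "char_formula_set \<sigma> P = Disjs \<sigma> (\<lambda>(s, F). char_formula \<sigma> s F) P"

definition sat_points :: "('v, 'a) signature \<Rightarrow> ('v, 'a) CO \<Rightarrow> (('v \<Rightarrow> 'a) \<times> ('v, 'a) sysf) set" where
  "sat_points \<sigma> \<phi> = {(s, F)\<in>Sset \<sigma>. sat_point s F \<phi>}"

definition sim_closed :: "('v, 'a) signature \<Rightarrow> (('v \<Rightarrow> 'a) \<times> ('v, 'a) sysf) set \<Rightarrow> bool" where
  "sim_closed \<sigma> P \<longleftrightarrow> P \<subseteq> Sset \<sigma> \<and>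
     (\<forall>s F G. (s, F) \<in> P \<longrightarrow> (s, G) \<in> Sset \<sigma> \<longrightarrow> sys_sim \<sigma> F G \<longrightarrow> (s, G) \<in> P)"

lemma sim_closed_sat_points:
  assumes sig: "wf_sig \<sigma>" and \<phi>: "wf_form \<sigma> \<phi>"
  shows "sim_closed \<sigma> (sat_points \<sigma> \<phi>)"
  unfolding sim_closed_def
proof (intro conjI allI impI)
  show "sat_points \<sigma> \<phi> \<subseteq> Sset \<sigma>" unfolding sat_points_def by blast
  fix s F G
  assume sF: "(s, F) \<in> sat_points \<sigma> \<phi>" and sG: "(s, G) \<in> Sset \<sigma>" and FG: "sys_sim \<sigma> F G"
  from sF have "(s, F) \<in> Sset \<sigma>" "sat_point s F \<phi>" unfolding sat_points_def by simp_all
  with sG have "sat_point s G \<phi>"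
    using sat_point_sys_sim[OF sig _ _ _ _ _ FG \<phi>] unfolding Sset_iff by blast
  with sG show "(s, G) \<in> sat_points \<sigma> \<phi>" unfolding sat_points_def by simp
qed

lemma sat_points_char_formula_set:
  assumes sig: "wf_sig \<sigma>" and P: "sim_closed \<sigma> P"
  shows "sat_points \<sigma> (char_formula_set \<sigma> P) = P"
proof -
  have PS: "P \<subseteq> Sset \<sigma>" using P unfolding sim_closed_def by blast
  then have fin: "finite P" using finite_Sset[OF sig] by (rule finite_subset)
  have "sat_point t G (char_formula_set \<sigma> P) \<longleftrightarrow> (t, G) \<in> P" if tG: "(t, G) \<in> Sset \<sigma>" for t G
  proof -
    have char: "sat_point t G (char_formula \<sigma> s F) \<longleftrightarrow> t = s \<and> sys_sim \<sigma> G F"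
      if "(s, F) \<in> P" for s F
    proof -
      have "(s, F) \<in> Sset \<sigma>" using PS that by blast
      then show ?thesis using tG sat_point_char_formula[OF sig] unfolding Sset_iff by simp
    qed
    have "sat_point t G (char_formula_set \<sigma> P) \<longleftrightarrow> (\<exists>(s, F)\<in>P. t = s \<and> sys_sim \<sigma> G F)"
      unfolding char_formula_set_def sat_point_Disjs[OF fin] using char by force
    also have "\<dots> \<longleftrightarrow> (t, G) \<in> P"
      using P tG sys_sim_refl sys_sim_sym unfolding sim_closed_def by blast
    finally show ?thesis .
  qed
  then show ?thesis using PS unfolding sat_points_def by auto
qed

lemma wf_form_char_formula_set:
  assumes sig: "wf_sig \<sigma>" and P: "P \<subseteq> Sset \<sigma>"
  shows "wf_form \<sigma> (char_formula_set \<sigma> P)"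
proof -
  have "\<forall>p\<in>P. wf_form \<sigma> (case p of (s, F) \<Rightarrow> char_formula \<sigma> s F)"
  proof
    fix p assume "p \<in> P"
    moreover obtain s F where p: "p = (s, F)" by force
    ultimately have "(s, F) \<in> Sset \<sigma>" using P by blast
    then show "wf_form \<sigma> (case p of (s, F) \<Rightarrow> char_formula \<sigma> s F)"
      using wf_form_char_formula[OF sig] p unfolding Sset_iff by simp
  qed
  then show ?thesis
    unfolding char_formula_set_def
    by (rule wf_form_Disjs[OF sig finite_subset[OF P finite_Sset[OF sig]]])
qed

lemma definable_iff_sim_closed:
  assumes sig: "wf_sig \<sigma>"
  shows "(\<exists>\<phi>. wf_form \<sigma> \<phi> \<and> P = sat_points \<sigma> \<phi>) \<longleftrightarrow> sim_closed \<sigma> P"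
proof
  assume "\<exists>\<phi>. wf_form \<sigma> \<phi> \<and> P = sat_points \<sigma> \<phi>"
  then show "sim_closed \<sigma> P" using sim_closed_sat_points[OF sig] by blast
next
  assume P: "sim_closed \<sigma> P"
  then have "wf_form \<sigma> (char_formula_set \<sigma> P)"
    using wf_form_char_formula_set[OF sig] unfolding sim_closed_def by blast
  moreover have "P = sat_points \<sigma> (char_formula_set \<sigma> P)"
    using sat_points_char_formula_set[OF sig P] by simp
  ultimately show "\<exists>\<phi>. wf_form \<sigma> \<phi> \<and> P = sat_points \<sigma> \<phi>" by blast
qed

definition ct_class ::
    "('v, 'a) signature \<Rightarrow> (('v \<Rightarrow> 'a) \<times> ('v, 'a) sysf) set \<Rightarrow> ('v, 'a) cteam set" where
  "ct_class \<sigma> P = {(T, F)\<in>cteams \<sigma>. \<forall>s\<in>T. (s, F) \<in> P}"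

definition gt_class ::
    "('v, 'a) signature \<Rightarrow> (('v \<Rightarrow> 'a) \<times> ('v, 'a) sysf) set \<Rightarrow> ('v, 'a) gteam set" where
  "gt_class \<sigma> P = {T\<in>gteams \<sigma>. T \<subseteq> P}"

lemma sat_c_eq_ct_class: "{T\<in>cteams \<sigma>. sat_c T \<phi>} = ct_class \<sigma> (sat_points \<sigma> \<phi>)"
proof -
  have "sat_c (T, F) \<phi> \<longleftrightarrow> (\<forall>s\<in>T. (s, F) \<in> sat_points \<sigma> \<phi>)" if "(T, F) \<in> cteams \<sigma>" for T F
    using cteams_point_in_Sset[OF that] unfolding sat_c_iff_pointwise sat_points_def by auto
  then show ?thesis unfolding ct_class_def by auto
qed

lemma sat_g_eq_gt_class: "{T\<in>gteams \<sigma>. sat_g T \<phi>} = gt_class \<sigma> (sat_points \<sigma> \<phi>)"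
proof -
  have "sat_g T \<phi> \<longleftrightarrow> T \<subseteq> sat_points \<sigma> \<phi>" if "T \<in> gteams \<sigma>" for T
    using that unfolding sat_g_iff_pointwise sat_points_def gteams_def by auto
  then show ?thesis unfolding gt_class_def by auto
qed

lemma definable_c_iff:
  assumes "wf_sig \<sigma>"
  shows "(\<exists>\<phi>. wf_form \<sigma> \<phi> \<and> K = {T\<in>cteams \<sigma>. sat_c T \<phi>}) \<longleftrightarrow>
    (\<exists>P. sim_closed \<sigma> P \<and> K = ct_class \<sigma> P)"
  unfolding sat_c_eq_ct_class definable_iff_sim_closed[OF assms, symmetric] by blast

lemma definable_g_iff:
  assumes "wf_sig \<sigma>"
  shows "(\<exists>\<phi>. wf_form \<sigma> \<phi> \<and> K = {T\<in>gteams \<sigma>. sat_g T \<phi>}) \<longleftrightarrow>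
    (\<exists>P. sim_closed \<sigma> P \<and> K = gt_class \<sigma> P)"
  unfolding sat_g_eq_gt_class definable_iff_sim_closed[OF assms, symmetric] by blast

lemma flat_c_ct_class: "flat_c \<sigma> (ct_class \<sigma> P)"
  unfolding flat_c_def ct_class_def using cteams_point_in_Sset cteams_singleton_iff by fastforce

lemma closed_equiv_c_ct_class:
  assumes P: "sim_closed \<sigma> P"
  shows "closed_equiv_c \<sigma> (ct_class \<sigma> P)"
  unfolding closed_equiv_c_def
proof (intro allI impI)
  fix T S assume "T \<in> ct_class \<sigma> P \<and> S \<in> cteams \<sigma> \<and> ct_equiv \<sigma> T S"
  moreover obtain TT F SS G where "T = (TT, F)" "S = (SS, G)" by force
  ultimately have "\<forall>s\<in>TT. (s, F) \<in> P" and S: "(TT, G) \<in> cteams \<sigma>" and "sys_sim \<sigma> F G"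
    and SS: "S = (TT, G)"
    unfolding ct_class_def ct_equiv_def by auto
  then have "\<forall>s\<in>TT. (s, G) \<in> P"
    using P cteams_point_in_Sset[OF S] unfolding sim_closed_def by blast
  then show "S \<in> ct_class \<sigma> P" unfolding ct_class_def SS using S by blast
qed

lemma flat_closed_c_imp_ct_class:
  fixes \<sigma> :: "('v, 'a) signature"
  assumes K: "K \<subseteq> cteams \<sigma>" and flat: "flat_c \<sigma> K" and closed: "closed_equiv_c \<sigma> K"
  shows "K = ct_class \<sigma> {(s, F). ({s}, F) \<in> K}" and "sim_closed \<sigma> {(s, F). ({s}, F) \<in> K}"
proof -
  show "K = ct_class \<sigma> {(s, F). ({s}, F) \<in> K}"
  proof (intro set_eqI)
    fix T :: "('v, 'a) cteam"
    obtain TT F where T: "T = (TT, F)" by force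
    show "T \<in> K \<longleftrightarrow> T \<in> ct_class \<sigma> {(s, F). ({s}, F) \<in> K}"
      using flat K unfolding T flat_c_def ct_class_def by auto
  qed
  show "sim_closed \<sigma> {(s, F). ({s}, F) \<in> K}"
    unfolding sim_closed_def
  proof (intro conjI allI impI)
    show "{(s, F). ({s}, F) \<in> K} \<subseteq> Sset \<sigma>" using K by (auto simp flip: cteams_singleton_iff)
    fix s F G assume "(s, F) \<in> {(s, F). ({s}, F) \<in> K}" "(s, G) \<in> Sset \<sigma>" "sys_sim \<sigma> F G"
    then have "({s}, F) \<in> K" "({s}, G) \<in> cteams \<sigma>" "ct_equiv \<sigma> ({s}, F) ({s}, G)"
      unfolding cteams_singleton_iff ct_equiv_def by simp_all
    then show "(s, G) \<in> {(s, F). ({s}, F) \<in> K}" using closed unfolding closed_equiv_c_def by blast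
  qed
qed

lemma flat_closed_c_iff:
  assumes "K \<subseteq> cteams \<sigma>"
  shows "flat_c \<sigma> K \<and> closed_equiv_c \<sigma> K \<longleftrightarrow> (\<exists>P. sim_closed \<sigma> P \<and> K = ct_class \<sigma> P)"
  using flat_closed_c_imp_ct_class[OF assms] flat_c_ct_class closed_equiv_c_ct_class by blast

lemma flat_g_gt_class: "flat_g \<sigma> (gt_class \<sigma> P)"
  unfolding flat_g_def gt_class_def gteams_def by auto

lemma closed_equiv_g_gt_class:
  assumes P: "sim_closed \<sigma> P"
  shows "closed_equiv_g \<sigma> (gt_class \<sigma> P)"
  unfolding closed_equiv_g_def
proof (intro allI impI)
  fix T S assume "T \<in> gt_class \<sigma> P \<and> S \<in> gteams \<sigma> \<and> gt_equiv \<sigma> T S"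
  then have TP: "T \<subseteq> P" and S: "S \<subseteq> Sset \<sigma>" and TS: "gt_equiv \<sigma> T S"
    unfolding gt_class_def gteams_def by auto
  have "(s, G) \<in> P" if sG: "(s, G) \<in> S" for s G
  proof -
    have G: "G \<in> systems \<sigma>" using S sG unfolding Sset_def by blast
    have "s \<in> fst ` gt_restrict \<sigma> S G" using sG sys_sim_refl unfolding gt_restrict_def by force
    also have "\<dots> = fst ` gt_restrict \<sigma> T G" using TS G unfolding gt_equiv_def by blast
    finally obtain F where "(s, F) \<in> T" "sys_sim \<sigma> F G" unfolding gt_restrict_def by auto
    then show ?thesis using P TP S sG unfolding sim_closed_def by blast
  qed
  then show "S \<in> gt_class \<sigma> P" unfolding gt_class_def gteams_def using S by auto
qed

lemma flat_closed_g_imp_gt_class: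
  assumes sig: "wf_sig \<sigma>" and K: "K \<subseteq> gteams \<sigma>"
    and flat: "flat_g \<sigma> K" and closed: "closed_equiv_g \<sigma> K"
  shows "K = gt_class \<sigma> {p. {p} \<in> K}" and "sim_closed \<sigma> {p. {p} \<in> K}"
proof -
  show "K = gt_class \<sigma> {p. {p} \<in> K}"
    using flat K unfolding flat_g_def gt_class_def by auto
  show "sim_closed \<sigma> {p. {p} \<in> K}"
    unfolding sim_closed_def
  proof (intro conjI allI impI)
    show "{p. {p} \<in> K} \<subseteq> Sset \<sigma>" using K unfolding gteams_def by auto
    fix s F G assume sF: "(s, F) \<in> {p. {p} \<in> K}" and sG: "(s, G) \<in> Sset \<sigma>"
      and FG: "sys_sim \<sigma> F G"
    have "(s, F) \<in> Sset \<sigma>" using sF K unfolding gteams_def by auto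
    then have F: "F \<in> systems \<sigma>" unfolding Sset_iff by blast
    have G: "G \<in> systems \<sigma>" using sG unfolding Sset_iff by blast
    have "sys_sim \<sigma> F H \<longleftrightarrow> sys_sim \<sigma> G H" if "H \<in> systems \<sigma>" for H
      using sys_sim_trans[OF sig F G that FG] sys_sim_trans[OF sig G F that sys_sim_sym[OF FG]]
      by blast
    then have "gt_equiv \<sigma> {(s, F)} {(s, G)}" unfolding gt_equiv_def gt_restrict_def by auto
    moreover have "{(s, G)} \<in> gteams \<sigma>" using sG unfolding gteams_def by blast
    ultimately show "(s, G) \<in> {p. {p} \<in> K}" using closed sF unfolding closed_equiv_g_def by blast
  qed
qed

lemma flat_closed_g_iff:
  assumes "wf_sig \<sigma>" "K \<subseteq> gteams \<sigma>"
  shows "flat_g \<sigma> K \<and> closed_equiv_g \<sigma> K \<longleftrightarrow> (\<exists>P. sim_closed \<sigma> P \<and> K = gt_class \<sigma> P)"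
  using flat_closed_g_imp_gt_class[OF assms] flat_g_gt_class closed_equiv_g_gt_class by blast

theorem theorem4p4:
  fixes \<sigma> :: "('v, 'a) signature"
  assumes "wf_sig \<sigma>"
  shows "(\<forall>K. K \<subseteq> cteams \<sigma> \<and> K \<noteq> {} \<longrightarrow>
            ((\<exists>\<phi>. wf_form \<sigma> \<phi> \<and> K = {T\<in>cteams \<sigma>. sat_c T \<phi>}) \<longleftrightarrow>
             flat_c \<sigma> K \<and> closed_equiv_c \<sigma> K)) \<and>
         (\<forall>K. K \<subseteq> gteams \<sigma> \<and> K \<noteq> {} \<longrightarrow>
            ((\<exists>\<phi>. wf_form \<sigma> \<phi> \<and> K = {T\<in>gteams \<sigma>. sat_g T \<phi>}) \<longleftrightarrow>
             flat_g \<sigma> K \<and> closed_equiv_g \<sigma> K))"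
proof (intro conjI allI impI)
  fix K :: "('v, 'a) cteam set"
  assume "K \<subseteq> cteams \<sigma> \<and> K \<noteq> {}"
  then have K: "K \<subseteq> cteams \<sigma>" by blast
  show "(\<exists>\<phi>. wf_form \<sigma> \<phi> \<and> K = {T\<in>cteams \<sigma>. sat_c T \<phi>}) \<longleftrightarrow>
      flat_c \<sigma> K \<and> closed_equiv_c \<sigma> K"
    unfolding definable_c_iff[OF assms] flat_closed_c_iff[OF K] ..
next
  fix K :: "('v, 'a) gteam set"
  assume "K \<subseteq> gteams \<sigma> \<and> K \<noteq> {}"
  then have K: "K \<subseteq> gteams \<sigma>" by blast
  show "(\<exists>\<phi>. wf_form \<sigma> \<phi> \<and> K = {T\<in>gteams \<sigma>. sat_g T \<phi>}) \<longleftrightarrow>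
      flat_g \<sigma> K \<and> closed_equiv_g \<sigma> K"
    unfolding definable_g_iff[OF assms] flat_closed_g_iff[OF assms K] ..
qed

end
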